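(* Let $\{\mathsf{f}(\mathsf{x},n)\}$ be a probability distribution on $\mathbb{Z}^d\times\mathbb{N}$ (with $\mathbb{N}=\{1,2,\dots\}$) satisfying the non-degeneracy, aperiodicity and exponential-tail assumptions in the context, and let $\lambda(\xi)$ and $\mathsf{f}_\xi$ be as in the context. Then there exist $\delta>0$ and $\epsilon>0$ such that for every $\xi\in\mathbb{C}^d$ with $|\xi|<\delta$ the function $\hat{\mathsf{f}}_\xi(z)=\sum_n\mathsf{f}_\xi(n)z^n$ satisfies: (a) $\hat{\mathsf{f}}_\xi(0)=0$ and the series $\hat{\mathsf{f}}_\xi(z)$ converges absolutely in a neighbourhood of the closed disc $\{|z|\le1+\epsilon\}$; (b) $z=1$ is the only zero of $\hat{\mathsf{f}}_\xi(z)-1$ in $\{|z|\le 1+\epsilon\}$; (c) $\hat{\mathsf{f}}_\xi'(1)\neq0$.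
   Context: Assumptions: the random vector $\mathsf{U}=(\mathsf{X},\mathsf{T})\in\mathbb{Z}^d\times\mathbb{N}$ with law $\mathsf{f}$ has a non-degenerate $(d+1)$-dimensional distribution, the random walk $\mathsf{S}_N=\sum_{i=1}^N\mathsf{U}_i$ with i.i.d. steps $\mathsf{U}_i\sim\mathsf{f}$ is aperiodic (its support is not contained in a proper sub-lattice), and there exist $C<\infty,\nu>0$ with $\mathsf{f}(\mathsf{x},n)\le Ce^{-\nu(|\mathsf{x}|+n)}$ for all $(\mathsf{x},n)$. Define $F(\xi,\lambda)=\log\sum_{\mathsf{x},n}e^{\mathsf{x}\cdot\xi-\lambda n}\mathsf{f}(\mathsf{x},n)$ for $(\xi,\lambda)\in\mathbb{C}^d\times\mathbb{C}$ near $0$; it is analytic on a small polydisc around $0$, and $\lambda(\xi)$ denotes the analytic function on a small polydisc around $0\in\mathbb{C}^d$ given by the implicit function theorem, characterized by $F(\xi,\lambda)=0\Leftrightarrow\lambda=\lambda(\xi)$ near the origin (so $\lambda(0)=0$). Set $\mathsf{f}_\xi(\mathsf{x},n)=\mathsf{f}(\mathsf{x},n)e^{\xi\cdot\mathsf{x}-\lambda(\xi)n}$ and $\mathsf{f}_\xi(n)=\sum_{\mathsf{x}}\mathsf{f}_\xi(\mathsf{x},n)$. *)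

theory Defs
  imports "HOL-Analysis.Analysis"
begin

definition dotc :: "int ^ 'd \<Rightarrow> complex ^ 'd \<Rightarrow> complex" where
  "dotc x \<xi> = (\<Sum>i\<in>UNIV. of_int (x $ i) * \<xi> $ i)"

definition F_fun :: "(int ^ 'd \<Rightarrow> nat \<Rightarrow> real) \<Rightarrow> complex ^ 'd \<Rightarrow> complex \<Rightarrow> complex" where
  "F_fun f \<xi> \<mu> = Ln (infsum (\<lambda>(x, n). complex_of_real (f x n) * exp (dotc x \<xi> - \<mu> * of_nat n)) UNIV)"

definition f_xi :: "(int ^ 'd \<Rightarrow> nat \<Rightarrow> real) \<Rightarrow> (complex ^ 'd \<Rightarrow> complex) \<Rightarrow> complex ^ 'd \<Rightarrow> nat \<Rightarrow> complex" where
  "f_xi f lam \<xi> n = infsum (\<lambda>x. complex_of_real (f x n) * exp (dotc x \<xi> - lam \<xi> * of_nat n)) UNIV"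

definition fhat :: "(int ^ 'd \<Rightarrow> nat \<Rightarrow> real) \<Rightarrow> (complex ^ 'd \<Rightarrow> complex) \<Rightarrow> complex ^ 'd \<Rightarrow> complex \<Rightarrow> complex" where
  "fhat f lam \<xi> z = (\<Sum>n. f_xi f lam \<xi> n * z ^ n)"

definition nondegenerate :: "(int ^ 'd \<Rightarrow> nat \<Rightarrow> real) \<Rightarrow> bool" where
  "nondegenerate f \<longleftrightarrow>
     \<not> (\<exists>(a :: real ^ 'd) (b :: real) (c :: real). (a \<noteq> 0 \<or> b \<noteq> 0) \<and>
          (\<forall>x n. f x n > 0 \<longrightarrow> (\<Sum>i\<in>UNIV. a $ i * of_int (x $ i)) + b * real n = c))"

definition aperiodic :: "(int ^ 'd \<Rightarrow> nat \<Rightarrow> real) \<Rightarrow> bool" where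
  "aperiodic f \<longleftrightarrow>
     (\<forall>(v :: int ^ 'd) (m :: int). \<exists>S c. finite S \<and> S \<subseteq> {(x, n). f x n > 0} \<and>
        (\<forall>i. v $ i = (\<Sum>s\<in>S. c s * (fst s) $ i)) \<and> m = (\<Sum>s\<in>S. c s * int (snd s)))"

end

theory Submission
  imports Defs
begin

text \<open>
  The time marginal \<open>p n = (\<Sum>x. f x n)\<close> is a probability distribution on the positive integers
  with exponential moments whose support generates \<open>\<int>\<close>. Its generating function \<open>P\<close> satisfies
  \<open>P z = 1\<close> on the closed unit disc only at \<open>z = 1\<close> (equality forces \<open>z ^ n = 1\<close> on the
  support), and \<open>P' 1\<close> is the positive mean. For small \<open>\<xi>\<close> the coefficients of \<open>fhat f lam \<xi>\<close>
  differ from \<open>p\<close> by little in a weighted \<open>\<ell>\<^sup>1\<close> norm with weights \<open>(n + 1) R ^ n\<close>, \<open>R > 1\<close>,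
  and they sum to 1 because \<open>F(\<xi>, \<lambda>(\<xi>)) = 0\<close>. Both properties of \<open>P\<close> survive such a
  perturbation: near \<open>z = 1\<close> one writes \<open>A z - 1 = (z - 1) Q z\<close> with \<open>Q\<close> close to
  \<open>P' 1\<close>, and away from 1 compactness bounds \<open>|P - 1|\<close> below on the unit disc, which a
  Lipschitz bound for \<open>P\<close> extends to a slightly larger disc.
\<close>

section \<open>Roots of aperiodic generating functions\<close>

lemma eq_one_if_powers_eq_one:
  fixes w :: "'a::field"
  assumes S: "finite S" and comb: "(\<Sum>n\<in>S. c n * int n) = 1"
    and roots: "\<And>n. n \<in> S \<Longrightarrow> w ^ n = 1"
  shows "w = 1"
proof -
  obtain n0 where "n0 \<in> S" "n0 \<noteq> 0"
    using comb by (metis (no_types, lifting) mult_zero_right of_nat_0 sum.neutral zero_neq_one)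
  then have "w \<noteq> 0" using roots by (metis power_0_left zero_neq_one)
  have "w powi (\<Sum>n\<in>T. c n * int n) = 1" if "finite T" "T \<subseteq> S" for T
    using that
  proof (induction T rule: finite_induct)
    case (insert n T)
    have "w powi (c n * int n) = (w ^ n) powi c n"
      by (simp add: power_int_power mult.commute)
    then show ?case
      using insert roots \<open>w \<noteq> 0\<close> by (simp add: power_int_add)
  qed simp
  from this[OF S order_refl] show ?thesis by (simp add: comb)
qed

lemma pgf_eq_one_imp_power_eq_one:
  fixes p :: "nat \<Rightarrow> real" and w :: complex
  assumes nonneg: "\<And>n. 0 \<le> p n" and sums: "p sums 1" and w: "norm w \<le> 1"
    and eq: "(\<Sum>n. of_real (p n) * w ^ n) = 1" and pos: "0 < p k"
  shows "w ^ k = 1"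
proof -
  have pow_le: "norm (w ^ n) \<le> 1" for n
    using w by (simp add: norm_power power_le_one)
  have "summable (\<lambda>n. of_real (p n) * w ^ n)"
    by (rule summable_norm_cancel, rule summable_comparison_test'[OF sums_summable[OF sums]])
       (use nonneg pow_le in \<open>auto simp: norm_mult intro: mult_left_le\<close>)
  then have "(\<lambda>n. Re (of_real (p n) * w ^ n)) sums 1"
    using eq sums_Re summable_sums by fastforce
  from sums_diff[OF sums this] have defect: "(\<lambda>n. p n * (1 - Re (w ^ n))) sums 0"
    by (simp add: algebra_simps)
  have "0 \<le> p n * (1 - Re (w ^ n))" for n
    using nonneg[of n] complex_Re_le_cmod[of "w ^ n"] pow_le[of n] by simp
  with defect have "p k * (1 - Re (w ^ k)) = 0"
    using suminf_eq_zero_iff[OF sums_summable[OF defect]] by (simp add: sums_iff)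
  then have "Re (w ^ k) = norm (w ^ k)"
    using pos complex_Re_le_cmod[of "w ^ k"] pow_le[of k] by simp
  then show ?thesis
    using Im_eq_0[of "w ^ k"] \<open>p k * _ = 0\<close> pos by (simp add: complex_eq_iff)
qed

section \<open>Power series estimates\<close>

lemma norm_power_diff_le:
  fixes z w :: "'a::real_normed_field"
  assumes z: "norm z \<le> R" and w: "norm w \<le> R" and R: "1 \<le> R"
  shows "norm (z ^ n - w ^ n) \<le> (real n + 1) * R ^ n * norm (z - w)"
proof -
  have "norm (w ^ (n - Suc i) * z ^ i) \<le> R ^ n" if "i < n" for i
  proof -
    have "norm (w ^ (n - Suc i) * z ^ i) \<le> R ^ (n - Suc i) * R ^ i"
      using z w by (simp add: norm_mult norm_power mult_mono' power_mono)
    also have "\<dots> \<le> R ^ n"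
      using R that by (simp flip: power_add add: power_increasing)
    finally show ?thesis .
  qed
  then have "norm (\<Sum>i<n. w ^ (n - Suc i) * z ^ i) \<le> of_nat (card {..<n}) * R ^ n"
    by (intro sum_norm_bound) auto
  also have "\<dots> \<le> (real n + 1) * R ^ n"
    using R by simp
  finally have "norm (z - w) * norm (\<Sum>i<n. w ^ (n - Suc i) * z ^ i) \<le> norm (z - w) * ((real n + 1) * R ^ n)"
    by (rule mult_left_mono) simp
  then show ?thesis
    by (simp only: power_diff_sumr2[of z n w] norm_mult mult.commute)
qed

lemma norm_sum_powers_le:
  fixes z :: "'a::real_normed_field"
  assumes z: "norm z \<le> R" and R: "1 \<le> R"
  shows "norm (\<Sum>i<n. z ^ i) \<le> (real n + 1) * R ^ n"
proof -
  have "norm (z ^ i) \<le> R ^ n" if "i < n" for i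
    using z R that power_mono[OF z, of i] power_increasing[of i n R]
    by (simp add: norm_power)
  then have "norm (\<Sum>i<n. z ^ i) \<le> of_nat (card {..<n}) * R ^ n"
    by (intro sum_norm_bound) auto
  also have "\<dots> \<le> (real n + 1) * R ^ n"
    using R by simp
  finally show ?thesis .
qed

lemma norm_sum_powers_minus_le:
  fixes z :: "'a::real_normed_field"
  assumes z: "norm z \<le> R" and R: "1 \<le> R"
  shows "norm ((\<Sum>i<n. z ^ i) - of_nat n) \<le> (real n + 1)^2 * R ^ n * norm (z - 1)"
proof -
  have "norm (z ^ i - 1 ^ i) \<le> (real n + 1) * R ^ n * norm (z - 1)" if "i < n" for i
  proof -
    have "norm (z ^ i - 1 ^ i) \<le> (real i + 1) * R ^ i * norm (z - 1)"
      by (rule norm_power_diff_le) (use z R in auto)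
    also have "\<dots> \<le> (real n + 1) * R ^ n * norm (z - 1)"
      using R that by (intro mult_right_mono mult_mono power_increasing) auto
    finally show ?thesis .
  qed
  then have "norm (\<Sum>i<n. z ^ i - 1 ^ i) \<le> of_nat (card {..<n}) * ((real n + 1) * R ^ n * norm (z - 1))"
    by (intro sum_norm_bound) auto
  also have "\<dots> \<le> (real n + 1)^2 * R ^ n * norm (z - 1)"
    using R by (simp add: power2_eq_square mult_right_mono)
  finally show ?thesis
    by (simp add: sum_subtractf)
qed

lemma powser_minus_one_eq:
  fixes a :: "nat \<Rightarrow> 'a::{real_normed_field, banach}"
  assumes "a sums 1" "summable (\<lambda>n. a n * z ^ n)" "summable (\<lambda>n. a n * (\<Sum>i<n. z ^ i))"
  shows "(\<Sum>n. a n * z ^ n) - 1 = (z - 1) * (\<Sum>n. a n * (\<Sum>i<n. z ^ i))"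
proof -
  have "(\<Sum>n. a n * z ^ n) - 1 = (\<Sum>n. a n * z ^ n - a n)"
    using suminf_diff[OF assms(2) sums_summable[OF assms(1)]] assms(1) by (simp add: sums_iff)
  also have "\<dots> = (\<Sum>n. (z - 1) * (a n * (\<Sum>i<n. z ^ i)))"
  proof (intro suminf_cong)
    fix n
    have "a n * z ^ n - a n = a n * (z ^ n - 1)"
      by (simp add: right_diff_distrib)
    then show "a n * z ^ n - a n = (z - 1) * (a n * (\<Sum>i<n. z ^ i))"
      by (simp add: power_diff_1_eq mult.left_commute)
  qed
  also have "\<dots> = (z - 1) * (\<Sum>n. a n * (\<Sum>i<n. z ^ i))"
    by (rule suminf_mult[OF assms(3)])
  finally show ?thesis .
qed

lemma deriv_powser_at_one:
  fixes a :: "nat \<Rightarrow> 'a::{real_normed_field, banach}"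
  assumes "summable (\<lambda>n. a n * of_real R ^ n)" "1 < R"
  shows "deriv (\<lambda>z. \<Sum>n. a n * z ^ n) 1 = (\<Sum>n. a n * of_nat n)"
proof -
  have inside: "norm (1::'a) < norm (of_real R :: 'a)"
    using assms(2) by simp
  have "summable (\<lambda>n. diffs a n * 1 ^ n)"
    by (rule termdiff_converges[where K = R])
       (use assms in \<open>auto intro: powser_inside[OF assms(1)]\<close>)
  then have "(\<lambda>n. a n * of_nat n) sums (\<Sum>n. diffs a n * 1 ^ n)"
    using diffs_equiv[of a 1] by (simp add: mult.commute)
  then show ?thesis
    using DERIV_imp_deriv[OF termdiffs_strong[OF assms(1) inside]] by (simp add: sums_iff)
qed

lemma exists_unit_disc_near:
  fixes z :: "'a::real_normed_field"
  assumes "norm z \<le> 1 + \<epsilon>" "0 \<le> \<epsilon>"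
  obtains w where "norm w \<le> 1" "norm (z - w) \<le> \<epsilon>"
proof (cases "norm z \<le> 1")
  case False
  have "z - z / of_real (norm z) = of_real (1 - 1 / norm z) * z"
    using False by (simp add: field_simps)
  also have "norm \<dots> = \<bar>1 - 1 / norm z\<bar> * norm z"
    by (simp only: norm_mult norm_of_real)
  also have "\<dots> = norm z - 1"
    using False by (subst abs_of_nonneg) (auto simp: field_simps divide_le_eq_1)
  finally have "norm (z - z / of_real (norm z)) = norm z - 1" .
  then show ?thesis
    using that[of "z / of_real (norm z)"] assms False by (simp add: norm_divide)
qed (use that assms in auto)

definition coeff_dist :: "real \<Rightarrow> (nat \<Rightarrow> complex) \<Rightarrow> (nat \<Rightarrow> complex) \<Rightarrow> real" where
  "coeff_dist R a b = (\<Sum>n. norm (a n - b n) * ((real n + 1) * R ^ n))"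

lemma coeff_dist_dominates:
  fixes g :: "nat \<Rightarrow> 'a::banach"
  assumes "summable (\<lambda>n. norm (a n - b n) * ((real n + 1) * R ^ n))"
    and "\<And>n. norm (g n) \<le> norm (a n - b n) * ((real n + 1) * R ^ n)"
  shows "summable g" "norm (suminf g) \<le> coeff_dist R a b"
proof -
  show "summable g"
    by (rule summable_norm_cancel, rule summable_comparison_test'[OF assms(1)]) (use assms(2) in auto)
  show "norm (suminf g) \<le> coeff_dist R a b"
    unfolding coeff_dist_def by (rule norm_suminf_le) (use assms in auto)
qed

section \<open>Perturbations of an aperiodic generating function\<close>

locale aperiodic_pgf =
  fixes p :: "nat \<Rightarrow> real" and R :: real
  assumes nonneg: "\<And>n. 0 \<le> p n"
    and sums_one: "p sums 1"
    and radius: "1 < R"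
    and moment: "summable (\<lambda>n. p n * ((real n + 1)^2 * R ^ n))"
    and generating: "\<exists>S c. finite S \<and> S \<subseteq> {n. 0 < p n} \<and> (\<Sum>n\<in>S. c n * int n) = 1"
begin

definition pgf :: "complex \<Rightarrow> complex" where
  "pgf z = (\<Sum>n. of_real (p n) * z ^ n)"

definition weighted_moment :: real where
  "weighted_moment = (\<Sum>n. p n * ((real n + 1)^2 * R ^ n))"

definition mean :: real where
  "mean = (\<Sum>n. p n * real n)"

lemma weighted_moment_nonneg: "0 \<le> weighted_moment"
  unfolding weighted_moment_def using nonneg radius by (intro suminf_nonneg moment) auto

lemma moment_dominates:
  fixes g :: "nat \<Rightarrow> 'a::banach"
  assumes "\<And>n. norm (g n) \<le> c * (p n * ((real n + 1)^2 * R ^ n))"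
  shows "summable g" "norm (suminf g) \<le> c * weighted_moment"
proof -
  have major: "summable (\<lambda>n. c * (p n * ((real n + 1)^2 * R ^ n)))"
    by (rule summable_mult[OF moment])
  show "summable g"
    by (rule summable_norm_cancel, rule summable_comparison_test'[OF major]) (use assms in auto)
  show "norm (suminf g) \<le> c * weighted_moment"
    using norm_suminf_le[OF assms major] suminf_mult[OF moment, of c]
    by (simp add: weighted_moment_def)
qed

lemma weight_le_moment_weight: "(real n + 1) * R ^ n \<le> (real n + 1)^2 * R ^ n"
  using radius by (intro mult_right_mono) (auto simp: power2_eq_square)

lemma summable_pgf:
  fixes z :: complex
  assumes "norm z \<le> R"
  shows "summable (\<lambda>n. of_real (p n) * z ^ n)"
proof (rule moment_dominates(1)[where c = 1])
  fix n
  have "norm z ^ n \<le> R ^ n"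
    by (rule power_mono) (use assms in auto)
  also have "\<dots> \<le> (real n + 1)^2 * R ^ n"
    using radius by (simp add: mult_le_cancel_right1)
  finally have "norm z ^ n \<le> (real n + 1)^2 * R ^ n" .
  then show "norm (of_real (p n) * z ^ n) \<le> 1 * (p n * ((real n + 1)^2 * R ^ n))"
    using nonneg[of n] by (simp add: norm_mult norm_power mult_left_mono)
qed

lemma pgf_one: "pgf 1 = 1"
  using sums_one by (simp add: pgf_def sums_iff flip: suminf_of_real)

lemma pgf_eq_one_iff:
  assumes "norm z \<le> 1"
  shows "pgf z = 1 \<longleftrightarrow> z = 1"
proof
  assume "pgf z = 1"
  then have "z ^ n = 1" if "0 < p n" for n
    using pgf_eq_one_imp_power_eq_one[OF nonneg sums_one assms] that by (simp add: pgf_def)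
  with generating show "z = 1"
    using eq_one_if_powers_eq_one by blast
qed (simp add: pgf_one)

lemma pgf_lipschitz:
  fixes z w :: complex
  assumes z: "norm z \<le> R" and w: "norm w \<le> R"
  shows "norm (pgf z - pgf w) \<le> norm (z - w) * weighted_moment"
proof -
  have "norm (of_real (p n) * (z ^ n - w ^ n)) \<le> norm (z - w) * (p n * ((real n + 1)^2 * R ^ n))" for n
  proof -
    have "norm (z ^ n - w ^ n) \<le> (real n + 1) * R ^ n * norm (z - w)"
      by (rule norm_power_diff_le) (use z w radius in auto)
    also have "\<dots> \<le> (real n + 1)^2 * R ^ n * norm (z - w)"
      using weight_le_moment_weight by (rule mult_right_mono) simp
    finally show ?thesis
      using nonneg[of n] by (simp add: norm_mult mult_left_mono mult_ac)
  qed
  from moment_dominates(2)[OF this] show ?thesis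
    using suminf_diff[OF summable_pgf[OF z] summable_pgf[OF w]]
    by (simp add: pgf_def right_diff_distrib)
qed

lemma pgf_bounded_away_from_one:
  assumes "0 < r"
  obtains c where "0 < c" "\<And>w. norm w \<le> 1 \<Longrightarrow> r \<le> norm (w - 1) \<Longrightarrow> c \<le> norm (pgf w - 1)"
proof -
  define K where "K = cball (0::complex) 1 - ball 1 r"
  have "compact K"
    unfolding K_def by (intro compact_diff) auto
  have "continuous_on K pgf"
  proof (intro continuous_at_imp_continuous_on ballI)
    fix w assume "w \<in> K"
    then have inside: "norm w < norm (of_real R :: complex)"
      using radius by (simp add: K_def)
    have "summable (\<lambda>n. of_real (p n) * (of_real R :: complex) ^ n)"
      by (rule summable_pgf) (use radius in simp)
    from isCont_powser[OF this inside] show "isCont pgf w"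
      unfolding pgf_def .
  qed
  then have cont: "continuous_on K (\<lambda>w. norm (pgf w - 1))"
    by (intro continuous_intros)
  show ?thesis
  proof (cases "K = {}")
    case True
    show ?thesis
    proof (rule that[of 1])
      fix w :: complex
      assume "norm w \<le> 1" "r \<le> norm (w - 1)"
      then have "w \<in> K"
        by (simp add: K_def dist_norm norm_minus_commute)
      with True show "1 \<le> norm (pgf w - 1)"
        by simp
    qed simp
  next
    case False
    then obtain w0 where w0: "w0 \<in> K" "\<And>w. w \<in> K \<Longrightarrow> norm (pgf w0 - 1) \<le> norm (pgf w - 1)"
      using continuous_attains_inf[OF \<open>compact K\<close> _ cont] by blast
    have "pgf w0 \<noteq> 1"
      using w0(1) pgf_eq_one_iff[of w0] \<open>0 < r\<close> by (auto simp: K_def)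
    then show ?thesis
      using that[of "norm (pgf w0 - 1)"] w0(2)
      by (auto simp: K_def dist_norm norm_minus_commute)
  qed
qed

lemma summable_mean: "summable (\<lambda>n. p n * real n)"
proof (rule moment_dominates(1)[where c = 1])
  fix n
  have "real n \<le> (real n + 1) * 1"
    by simp
  also have "\<dots> \<le> (real n + 1) * R ^ n"
    using radius by (intro mult_left_mono one_le_power) auto
  also have "\<dots> \<le> (real n + 1)^2 * R ^ n"
    by (rule weight_le_moment_weight)
  finally show "norm (p n * real n) \<le> 1 * (p n * ((real n + 1)^2 * R ^ n))"
    using nonneg[of n] by (simp add: mult_left_mono)
qed

lemma mean_pos: "0 < mean"
proof -
  obtain S c where "finite S" "S \<subseteq> {n. 0 < p n}" "(\<Sum>n\<in>S. c n * int n) = 1"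
    using generating by blast
  then obtain k where "0 < p k" "k \<noteq> 0"
    by (metis (no_types, lifting) mem_Collect_eq mult_zero_right of_nat_0 subset_eq sum.neutral zero_neq_one)
  then show ?thesis
    unfolding mean_def using nonneg by (intro suminf_pos2[OF summable_mean, of k]) auto
qed

lemma summable_perturbed_weight:
  fixes a :: "nat \<Rightarrow> complex"
  assumes close: "summable (\<lambda>n. norm (a n - of_real (p n)) * ((real n + 1) * R ^ n))"
  shows "summable (\<lambda>n. norm (a n) * ((real n + 1) * R ^ n))"
proof (rule summable_comparison_test'[OF summable_add[OF close moment]])
  fix n
  have "norm (a n) \<le> norm (a n - of_real (p n)) + p n"
    using norm_triangle_ineq[of "a n - of_real (p n)" "of_real (p n)"] nonneg[of n] by simp
  then have "norm (a n) * ((real n + 1) * R ^ n)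
      \<le> norm (a n - of_real (p n)) * ((real n + 1) * R ^ n) + p n * ((real n + 1) * R ^ n)"
    using radius by (simp add: mult_right_mono flip: distrib_right)
  also have "p n * ((real n + 1) * R ^ n) \<le> p n * ((real n + 1)^2 * R ^ n)"
    using weight_le_moment_weight nonneg by (rule mult_left_mono)
  finally show "norm (norm (a n) * ((real n + 1) * R ^ n))
      \<le> norm (a n - of_real (p n)) * ((real n + 1) * R ^ n) + p n * ((real n + 1)^2 * R ^ n)"
    using radius by simp
qed

lemma summable_perturbed_powser:
  fixes a :: "nat \<Rightarrow> complex" and z :: complex
  assumes close: "summable (\<lambda>n. norm (a n - of_real (p n)) * ((real n + 1) * R ^ n))"
    and z: "norm z \<le> R"
  shows "summable (\<lambda>n. norm (a n * z ^ n))"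
proof (rule summable_comparison_test'[OF summable_perturbed_weight[OF close]])
  fix n
  have "norm z ^ n \<le> (real n + 1) * R ^ n"
    using power_mono[OF z, of n] radius by (simp add: mult_le_cancel_right1 order_trans)
  then show "norm (norm (a n * z ^ n)) \<le> norm (a n) * ((real n + 1) * R ^ n)"
    by (simp add: norm_mult norm_power mult_left_mono)
qed

lemma perturbed_minus_pgf:
  fixes a :: "nat \<Rightarrow> complex" and z :: complex
  assumes close: "summable (\<lambda>n. norm (a n - of_real (p n)) * ((real n + 1) * R ^ n))"
    and z: "norm z \<le> R"
  shows "norm ((\<Sum>n. a n * z ^ n) - pgf z) \<le> coeff_dist R a (\<lambda>n. of_real (p n))"
proof -
  have "norm ((a n - of_real (p n)) * z ^ n) \<le> norm (a n - of_real (p n)) * ((real n + 1) * R ^ n)" for n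
  proof -
    have "norm z ^ n \<le> (real n + 1) * R ^ n"
      using power_mono[OF z, of n] radius by (simp add: mult_le_cancel_right1 order_trans)
    then show ?thesis
      by (simp add: norm_mult norm_power mult_left_mono)
  qed
  from coeff_dist_dominates(2)[OF close this] show ?thesis
    using suminf_diff[OF summable_norm_cancel[OF summable_perturbed_powser[OF close z]] summable_pgf[OF z]]
    by (simp add: pgf_def left_diff_distrib)
qed

lemma perturbed_quotient_near_mean:
  fixes a :: "nat \<Rightarrow> complex" and z :: complex
  assumes close: "summable (\<lambda>n. norm (a n - of_real (p n)) * ((real n + 1) * R ^ n))"
    and z: "norm z \<le> R"
  shows "summable (\<lambda>n. a n * (\<Sum>i<n. z ^ i))"
    and "norm ((\<Sum>n. a n * (\<Sum>i<n. z ^ i)) - of_real mean)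
           \<le> coeff_dist R a (\<lambda>n. of_real (p n)) + norm (z - 1) * weighted_moment"
proof -
  define h where "h n = (\<Sum>i<n. z ^ i)" for n
  have "norm ((a n - of_real (p n)) * h n) \<le> norm (a n - of_real (p n)) * ((real n + 1) * R ^ n)" for n
    unfolding h_def using norm_sum_powers_le[OF z, of n] radius
    by (simp add: norm_mult mult_left_mono)
  note perturbation = coeff_dist_dominates[OF close this]
  have "norm (of_real (p n) * (h n - of_nat n)) \<le> norm (z - 1) * (p n * ((real n + 1)^2 * R ^ n))" for n
    unfolding h_def using norm_sum_powers_minus_le[OF z, of n] radius nonneg[of n]
    by (simp add: norm_mult mult_left_mono mult_ac)
  note discretization = moment_dominates[OF this]
  have "(\<lambda>n. of_real (p n * real n)) sums (of_real mean :: complex)"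
    unfolding mean_def by (rule sums_of_real[OF summable_sums[OF summable_mean]])
  then have mean_sums: "(\<lambda>n. of_real (p n) * of_nat n) sums (of_real mean :: complex)"
    by simp
  have split: "a n * h n = ((a n - of_real (p n)) * h n + of_real (p n) * (h n - of_nat n))
      + of_real (p n) * of_nat n" for n
    by (simp add: algebra_simps)
  have sums: "(\<lambda>n. a n * h n) sums ((\<Sum>n. (a n - of_real (p n)) * h n)
      + (\<Sum>n. of_real (p n) * (h n - of_nat n)) + of_real mean)"
    unfolding split
    by (intro sums_add mean_sums summable_sums perturbation(1) discretization(1))
  then show "summable (\<lambda>n. a n * (\<Sum>i<n. z ^ i))"
    by (auto simp: h_def sums_iff)
  show "norm ((\<Sum>n. a n * (\<Sum>i<n. z ^ i)) - of_real mean)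
      \<le> coeff_dist R a (\<lambda>n. of_real (p n)) + norm (z - 1) * weighted_moment"
  proof -
    have "(\<Sum>n. a n * (\<Sum>i<n. z ^ i)) - of_real mean
        = (\<Sum>n. (a n - of_real (p n)) * h n) + (\<Sum>n. of_real (p n) * (h n - of_nat n))"
      using sums by (simp add: h_def sums_iff)
    then show ?thesis
      using norm_triangle_ineq perturbation(2) discretization(2) by (smt (verit))
  qed
qed

lemma perturbed_ne_one_far:
  fixes a :: "nat \<Rightarrow> complex" and z w :: complex
  assumes close: "summable (\<lambda>n. norm (a n - of_real (p n)) * ((real n + 1) * R ^ n))"
    and z: "norm z \<le> R" and w: "norm w \<le> R"
    and small: "coeff_dist R a (\<lambda>n. of_real (p n)) + norm (z - w) * weighted_moment < norm (pgf w - 1)"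
  shows "(\<Sum>n. a n * z ^ n) \<noteq> 1"
proof
  assume "(\<Sum>n. a n * z ^ n) = 1"
  then have "pgf w - 1 = - ((\<Sum>n. a n * z ^ n) - pgf z) - (pgf z - pgf w)"
    by simp
  then have "norm (pgf w - 1) \<le> norm ((\<Sum>n. a n * z ^ n) - pgf z) + norm (pgf z - pgf w)"
    by (metis norm_minus_cancel norm_triangle_ineq4)
  then show False
    using perturbed_minus_pgf[OF close z] pgf_lipschitz[OF z w] small by linarith
qed

lemma perturbed_eq_one_iff_near:
  fixes a :: "nat \<Rightarrow> complex" and z :: complex
  assumes close: "summable (\<lambda>n. norm (a n - of_real (p n)) * ((real n + 1) * R ^ n))"
    and sums: "a sums 1" and z: "norm z \<le> R"
    and small: "coeff_dist R a (\<lambda>n. of_real (p n)) + norm (z - 1) * weighted_moment < mean"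
  shows "(\<Sum>n. a n * z ^ n) = 1 \<longleftrightarrow> z = 1"
proof -
  have "(\<Sum>n. a n * (\<Sum>i<n. z ^ i)) \<noteq> 0"
    using perturbed_quotient_near_mean(2)[OF close z] small by auto
  moreover have "(\<Sum>n. a n * z ^ n) - 1 = (z - 1) * (\<Sum>n. a n * (\<Sum>i<n. z ^ i))"
    by (rule powser_minus_one_eq[OF sums summable_norm_cancel[OF summable_perturbed_powser[OF close z]]
          perturbed_quotient_near_mean(1)[OF close z]])
  ultimately show ?thesis
    by auto
qed

lemma deriv_perturbed_nonzero:
  fixes a :: "nat \<Rightarrow> complex"
  assumes close: "summable (\<lambda>n. norm (a n - of_real (p n)) * ((real n + 1) * R ^ n))"
    and small: "coeff_dist R a (\<lambda>n. of_real (p n)) < mean"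
  shows "deriv (\<lambda>z. \<Sum>n. a n * z ^ n) 1 \<noteq> 0"
proof -
  have "summable (\<lambda>n. a n * of_real R ^ n)"
    by (rule summable_norm_cancel[OF summable_perturbed_powser[OF close]]) (use radius in simp)
  from deriv_powser_at_one[OF this radius] show ?thesis
    using perturbed_quotient_near_mean(2)[OF close, of 1] radius small
    by auto
qed

theorem perturbed_pgf_unique_root:
  obtains \<epsilon> \<kappa> :: real where "0 < \<epsilon>" "0 < \<kappa>" "1 + \<epsilon> < R"
    and "\<And>a z. summable (\<lambda>n. norm (a n - of_real (p n)) * ((real n + 1) * R ^ n)) \<Longrightarrow>
           coeff_dist R a (\<lambda>n. of_real (p n)) \<le> \<kappa> \<Longrightarrow> a sums 1 \<Longrightarrow> norm z \<le> 1 + \<epsilon> \<Longrightarrow>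
           (\<Sum>n. a n * z ^ n) = 1 \<longleftrightarrow> z = 1"
    and "\<And>a. summable (\<lambda>n. norm (a n - of_real (p n)) * ((real n + 1) * R ^ n)) \<Longrightarrow>
           coeff_dist R a (\<lambda>n. of_real (p n)) \<le> \<kappa> \<Longrightarrow> deriv (\<lambda>z. \<Sum>n. a n * z ^ n) 1 \<noteq> 0"
proof -
  define L where "L = weighted_moment"
  define r where "r = mean / (4 * (L + 1))"
  have L: "0 \<le> L" and r: "0 < r" "r * L \<le> mean / 4"
    using weighted_moment_nonneg mean_pos by (auto simp: L_def r_def field_simps)
  obtain c where c: "0 < c" "\<And>w. norm w \<le> 1 \<Longrightarrow> r / 2 \<le> norm (w - 1) \<Longrightarrow> c \<le> norm (pgf w - 1)"
    using pgf_bounded_away_from_one[of "r / 2"] r by auto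
  define \<epsilon> where "\<epsilon> = min ((R - 1) / 2) (min (r / 2) (c / (3 * (L + 1))))"
  define \<kappa> where "\<kappa> = min (mean / 4) (c / 3)"
  have \<epsilon>_le: "\<epsilon> \<le> (R - 1) / 2" "\<epsilon> \<le> r / 2" "\<epsilon> \<le> c / (3 * (L + 1))"
    unfolding \<epsilon>_def by linarith+
  have \<epsilon>: "0 < \<epsilon>" "1 + \<epsilon> < R"
    using radius r c L \<epsilon>_le by (auto simp: \<epsilon>_def)
  have "\<epsilon> * L \<le> c / (3 * (L + 1)) * L"
    using L \<epsilon>_le by (intro mult_right_mono) auto
  also have "\<dots> \<le> c / 3"
    using L c by (simp add: field_simps)
  finally have \<epsilon>L: "\<epsilon> * L \<le> c / 3" .
  have \<kappa>: "0 < \<kappa>" "\<kappa> \<le> mean / 4" "\<kappa> \<le> c / 3"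
    using mean_pos c by (auto simp: \<kappa>_def)
  show ?thesis
  proof (rule that[OF \<epsilon>(1) \<kappa>(1) \<epsilon>(2)])
    fix a :: "nat \<Rightarrow> complex" and z :: complex
    assume close: "summable (\<lambda>n. norm (a n - of_real (p n)) * ((real n + 1) * R ^ n))"
      and dist: "coeff_dist R a (\<lambda>n. of_real (p n)) \<le> \<kappa>" and sums: "a sums 1"
      and z: "norm z \<le> 1 + \<epsilon>"
    have zR: "norm z \<le> R"
      using z \<epsilon> by simp
    show "(\<Sum>n. a n * z ^ n) = 1 \<longleftrightarrow> z = 1"
    proof (cases "norm (z - 1) \<le> r")
      case True
      then have "norm (z - 1) * weighted_moment \<le> r * L"
        using L by (simp add: L_def mult_right_mono)
      then show ?thesis
        using perturbed_eq_one_iff_near[OF close sums zR] dist r \<kappa> mean_pos by linarith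
    next
      case False
      obtain w where w: "norm w \<le> 1" "norm (z - w) \<le> \<epsilon>"
        using exists_unit_disc_near[OF z] \<epsilon> by auto
      have "r / 2 \<le> norm (w - 1)"
        using False w \<epsilon>_le norm_triangle_ineq[of "z - w" "w - 1"] by simp
      then have "c \<le> norm (pgf w - 1)"
        using c w by simp
      moreover have "norm (z - w) * weighted_moment \<le> c / 3"
        using w \<epsilon>L L by (metis L_def mult_right_mono order_trans)
      ultimately have "(\<Sum>n. a n * z ^ n) \<noteq> 1"
        using perturbed_ne_one_far[OF close zR, of w] w radius dist \<kappa> c by simp
      then show ?thesis
        using False r by auto
    qed
  next
    fix a :: "nat \<Rightarrow> complex"
    assume "summable (\<lambda>n. norm (a n - of_real (p n)) * ((real n + 1) * R ^ n))"
      and "coeff_dist R a (\<lambda>n. of_real (p n)) \<le> \<kappa>"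
    then show "deriv (\<lambda>z. \<Sum>n. a n * z ^ n) 1 \<noteq> 0"
      using deriv_perturbed_nonzero \<kappa> mean_pos by fastforce
  qed
qed

end

section \<open>Exponential sums over the lattice\<close>

definition norm1 :: "int ^ 'd \<Rightarrow> real" where
  "norm1 x = (\<Sum>i\<in>UNIV. \<bar>real_of_int (x $ i)\<bar>)"

lemma norm1_nonneg: "0 \<le> norm1 x"
  by (simp add: norm1_def sum_nonneg)

lemma norm_dotc_le: "norm (dotc x \<xi>) \<le> norm1 x * norm \<xi>"
proof -
  have "norm (dotc x \<xi>) \<le> (\<Sum>i\<in>UNIV. norm (of_int (x $ i) * \<xi> $ i))"
    unfolding dotc_def by (rule norm_sum)
  also have "\<dots> = (\<Sum>i\<in>UNIV. \<bar>real_of_int (x $ i)\<bar> * norm (\<xi> $ i))"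
    by (simp add: norm_mult)
  also have "\<dots> \<le> (\<Sum>i\<in>UNIV. \<bar>real_of_int (x $ i)\<bar> * norm \<xi>)"
    by (intro sum_mono mult_left_mono Finite_Cartesian_Product.norm_nth_le) auto
  finally show ?thesis
    by (simp add: norm1_def sum_distrib_right)
qed

lemma summable_on_exp_abs_int:
  assumes "0 < c"
  shows "(\<lambda>k::int. exp (- c * \<bar>real_of_int k\<bar>)) summable_on UNIV"
proof -
  have "summable (\<lambda>n. exp (- c) ^ n)"
    using assms by (intro summable_geometric) simp
  then have geometric: "(\<lambda>n::nat. exp (- c * real n)) summable_on UNIV"
    by (simp add: summable_on_UNIV_nonneg_real_iff mult.commute flip: exp_of_nat_mult)
  have "(\<lambda>k::int. exp (- c * \<bar>real_of_int k\<bar>)) summable_on range int \<union> range (\<lambda>n. - int n)"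
    by (intro summable_on_union)
       (use geometric in \<open>simp_all add: summable_on_reindex inj_on_def o_def\<close>)
  also have "range int \<union> range (\<lambda>n. - int n) = UNIV"
    by (auto intro: int_cases2)
  finally show ?thesis .
qed

lemma summable_on_exp_norm1:
  assumes "0 < c"
  shows "(\<lambda>x::int ^ 'd. exp (- c * norm1 x)) summable_on UNIV"
proof -
  have bij: "bij_betw (vec_nth :: int ^ 'd \<Rightarrow> 'd \<Rightarrow> int) UNIV UNIV"
    by (rule bij_betwI[where g = vec_lambda]) auto
  have "Infinite_Set_Sum.abs_summable_on (\<lambda>h. \<Prod>i\<in>UNIV. exp (- c * \<bar>real_of_int (h i)\<bar>))
      (PiE (UNIV :: 'd set) (\<lambda>_. UNIV))"
    using summable_on_exp_abs_int[OF assms]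
    by (intro abs_summable_on_prod_PiE) (simp_all flip: abs_summable_equivalent)
  then have "(\<lambda>h. \<Prod>i\<in>UNIV. exp (- c * \<bar>real_of_int (h i)\<bar>)) summable_on (UNIV :: ('d \<Rightarrow> int) set)"
    by (simp add: abs_prod flip: abs_summable_equivalent)
  then have "(\<lambda>x::int ^ 'd. \<Prod>i\<in>UNIV. exp (- c * \<bar>real_of_int (x $ i)\<bar>)) summable_on UNIV"
    by (subst summable_on_reindex_bij_betw[OF bij])
  then show ?thesis
    by (simp add: norm1_def sum_distrib_left exp_sum)
qed

lemma summable_on_exp_norm1_time:
  assumes "0 < c"
  shows "(\<lambda>(x::int ^ 'd, n::nat). exp (- c * (norm1 x + real n))) summable_on UNIV"
proof -
  define q where "q = exp (- c)"
  have q: "norm q < 1"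
    using assms by (simp add: q_def)
  have "((\<lambda>n. exp (- c * norm1 x) * q ^ n) has_sum exp (- c * norm1 x) * (1 / (1 - q))) UNIV"
    for x :: "int ^ 'd"
    by (intro has_sum_cmult_right sums_nonneg_imp_has_sum geometric_sums q) (simp add: q_def)
  moreover have "exp (- c * (norm1 x + real n)) = exp (- c * norm1 x) * q ^ n" for x :: "int ^ 'd" and n
    by (simp add: q_def flip: exp_add exp_of_nat_mult) (simp add: algebra_simps)
  ultimately have "(\<lambda>(x, n). exp (- c * (norm1 x + real n))) summable_on Sigma (UNIV :: (int ^ 'd) set) (\<lambda>_. UNIV)"
    by (intro summable_on_SigmaI[where g = "\<lambda>x. exp (- c * norm1 x) * (1 / (1 - q))"]
        summable_on_cmult_left summable_on_exp_norm1 assms) (auto simp: q_def)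
  then show ?thesis
    by simp
qed

lemma summable_on_pair_slices:
  fixes g :: "'a \<times> nat \<Rightarrow> 'b::{banach, complete_uniform_space, uniform_topological_group_add}"
  assumes "g summable_on UNIV"
  shows "(\<lambda>x. g (x, n)) summable_on UNIV"
    and "(\<lambda>n. \<Sum>\<^sub>\<infinity>x. g (x, n)) sums (\<Sum>\<^sub>\<infinity>u. g u)"
proof -
  have "(g has_sum (\<Sum>\<^sub>\<infinity>u. g u)) (UNIV \<times> UNIV)"
    using assms by simp
  then have swapped: "((\<lambda>(n, x). g (x, n)) has_sum (\<Sum>\<^sub>\<infinity>u. g u)) (Sigma UNIV (\<lambda>_. UNIV))"
    by (subst (asm) has_sum_swap) (simp add: case_prod_unfold)
  show slice: "(\<lambda>x. g (x, n)) summable_on UNIV" for n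
    using summable_on_SigmaD1[of "\<lambda>n x. g (x, n)" UNIV "\<lambda>_. UNIV" n] swapped
    by (auto simp: summable_on_def case_prod_unfold)
  show "(\<lambda>n. \<Sum>\<^sub>\<infinity>x. g (x, n)) sums (\<Sum>\<^sub>\<infinity>u. g u)"
    by (rule has_sum_imp_sums, rule has_sum_Sigma'[OF swapped]) (use slice in simp)
qed

lemma summable_dominated_by_slices:
  fixes B :: "'a \<times> nat \<Rightarrow> real"
  assumes "B summable_on UNIV" and "\<And>n. 0 \<le> c n" and "\<And>n. c n \<le> (\<Sum>\<^sub>\<infinity>x. B (x, n))"
  shows "summable c" "suminf c \<le> (\<Sum>\<^sub>\<infinity>u. B u)"
proof -
  note slices = summable_on_pair_slices(2)[OF assms(1)]
  show "summable c"
    by (rule summable_comparison_test'[OF sums_summable[OF slices]]) (use assms in auto)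
  then show "suminf c \<le> (\<Sum>\<^sub>\<infinity>u. B u)"
    using suminf_le[OF assms(3) _ sums_summable[OF slices]] slices by (simp add: sums_iff)
qed

section \<open>Exponentially tilted distributions\<close>

definition tilted :: "(int ^ 'd \<Rightarrow> nat \<Rightarrow> real) \<Rightarrow> complex ^ 'd \<Rightarrow> complex \<Rightarrow> (int ^ 'd) \<times> nat \<Rightarrow> complex" where
  "tilted f \<xi> \<mu> = (\<lambda>(x, n). complex_of_real (f x n) * exp (dotc x \<xi> - \<mu> * of_nat n))"

lemma norm_tilt_exponent_le:
  assumes "norm \<xi> \<le> \<eta>" "norm \<mu> \<le> \<eta>"
  shows "norm (dotc x \<xi> - \<mu> * of_nat n) \<le> \<eta> * (norm1 x + real n)"
proof -
  have "norm (dotc x \<xi> - \<mu> * of_nat n) \<le> norm1 x * norm \<xi> + norm \<mu> * real n"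
    using norm_triangle_ineq4[of "dotc x \<xi>" "\<mu> * of_nat n"] norm_dotc_le[of x \<xi>]
    by (simp add: norm_mult)
  also have "\<dots> \<le> norm1 x * \<eta> + \<eta> * real n"
    using assms norm1_nonneg[of x] by (intro add_mono mult_left_mono mult_right_mono) auto
  finally show ?thesis
    by (simp add: algebra_simps)
qed

lemma norm_exp_minus_one_le:
  fixes w :: complex
  shows "norm (exp w - 1) \<le> norm w * exp (norm w)"
proof -
  have "norm (exp w - exp 0) \<le> exp (norm w) * norm (w - 0)"
  proof (rule field_differentiable_bound[where S = "cball 0 (norm w)" and f' = exp])
    fix z :: complex
    assume "z \<in> cball 0 (norm w)"
    then show "norm (exp z) \<le> exp (norm w)"
      using norm_exp[of z] by (simp add: order_trans)
  qed (auto intro: DERIV_exp[THEN has_field_derivative_at_within])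
  then show ?thesis
    by (simp add: mult.commute)
qed

text \<open>
  For tilts of size at most \<open>s / 2\<close>, the weight \<open>exp_weight s\<close> dominates the tilted summands,
  their deviation from \<open>f\<close> (divided by the tilt size) and the moments of the marginal needed
  with radius \<open>exp (s / 2)\<close>.
\<close>

definition exp_weight :: "real \<Rightarrow> int ^ 'd \<Rightarrow> nat \<Rightarrow> real" where
  "exp_weight s x n = (1 + norm1 x + real n)^2 * exp (s * (norm1 x + real n))"

locale exp_moment =
  fixes f :: "int ^ 'd \<Rightarrow> nat \<Rightarrow> real" and s :: real
  assumes nonneg: "\<And>x n. 0 \<le> f x n" and s_pos: "0 < s"
    and moment: "(\<lambda>(x, n). f x n * exp_weight s x n) summable_on UNIV"
begin

definition marginal :: "nat \<Rightarrow> real" where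
  "marginal n = (\<Sum>\<^sub>\<infinity>x. f x n)"

definition tilted_marginal :: "complex ^ 'd \<Rightarrow> complex \<Rightarrow> nat \<Rightarrow> complex" where
  "tilted_marginal \<xi> \<mu> n = (\<Sum>\<^sub>\<infinity>x. tilted f \<xi> \<mu> (x, n))"

definition total_weight :: real where
  "total_weight = (\<Sum>\<^sub>\<infinity>(x, n). f x n * exp_weight s x n)"

lemma exp_weight_ge_one: "1 \<le> exp_weight s x n"
  using s_pos norm1_nonneg[of x] unfolding exp_weight_def
  by (intro mult_ge1_I one_le_power) auto

lemma total_weight_nonneg: "0 \<le> total_weight"
  unfolding total_weight_def
  by (intro infsum_nonneg) (auto intro!: mult_nonneg_nonneg nonneg order_trans[OF zero_le_one exp_weight_ge_one])

lemma summable_on_slice: "(\<lambda>x. f x n) summable_on UNIV"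
proof -
  have "(\<lambda>x. f x n * exp_weight s x n) summable_on UNIV"
    using summable_on_pair_slices(1)[OF moment] by simp
  then show ?thesis
    by (rule summable_on_comparison_test)
       (use mult_left_mono[OF exp_weight_ge_one nonneg] nonneg in auto)
qed

lemma moment_weight_le: "(real n + 1)^2 * exp (s / 2) ^ n \<le> exp_weight s x n"
  unfolding exp_weight_def
proof (rule mult_mono)
  show "(real n + 1)^2 \<le> (1 + norm1 x + real n)^2"
    using norm1_nonneg[of x] by (intro power_mono) auto
  have "exp (s / 2) ^ n = exp (s / 2 * real n)"
    by (simp add: mult.commute flip: exp_of_nat_mult)
  also have "\<dots> \<le> exp (s * (norm1 x + real n))"
    using s_pos norm1_nonneg[of x] by (simp add: mult_left_mono)
  finally show "exp (s / 2) ^ n \<le> exp (s * (norm1 x + real n))" .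
qed (use norm1_nonneg[of x] in auto)

lemma norm_tilted_le:
  assumes "norm \<xi> \<le> s / 2" "norm \<mu> \<le> s / 2"
  shows "norm (tilted f \<xi> \<mu> (x, n)) \<le> f x n * exp_weight s x n"
proof -
  have "norm (exp (dotc x \<xi> - \<mu> * of_nat n)) \<le> exp (s / 2 * (norm1 x + real n))"
    using norm_exp[of "dotc x \<xi> - \<mu> * of_nat n"] norm_tilt_exponent_le[OF assms, of x n]
    by (simp add: order_trans)
  also have "\<dots> \<le> 1 * exp (s * (norm1 x + real n))"
    using s_pos norm1_nonneg[of x] by (simp add: mult_right_mono)
  also have "\<dots> \<le> exp_weight s x n"
    unfolding exp_weight_def using norm1_nonneg[of x] by (intro mult_right_mono one_le_power) auto
  finally show ?thesis
    using nonneg[of x n] by (simp add: tilted_def norm_mult mult_left_mono)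
qed

lemma summable_on_tilted:
  assumes "norm \<xi> \<le> s / 2" "norm \<mu> \<le> s / 2"
  shows "tilted f \<xi> \<mu> summable_on UNIV"
  by (rule Infinite_Sum.abs_summable_summable, rule Infinite_Sum.abs_summable_on_comparison_test'[OF moment])
     (use norm_tilted_le[OF assms] in auto)

lemma norm_tilted_minus_le:
  assumes \<eta>: "0 \<le> \<eta>" "\<eta> \<le> s / 2" and "norm \<xi> \<le> \<eta>" "norm \<mu> \<le> \<eta>"
  shows "norm (tilted f \<xi> \<mu> (x, n) - of_real (f x n)) * ((real n + 1) * exp (s / 2) ^ n)
           \<le> \<eta> * (f x n * exp_weight s x n)"
proof -
  define y where "y = norm1 x + real n"
  have y: "0 \<le> y" "real n \<le> y"
    using norm1_nonneg[of x] by (auto simp: y_def)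
  define w where "w = dotc x \<xi> - \<mu> * of_nat n"
  have w: "norm w \<le> \<eta> * y"
    unfolding w_def y_def by (rule norm_tilt_exponent_le) fact+
  have "norm (exp w - 1) \<le> \<eta> * y * exp (s / 2 * y)"
    using norm_exp_minus_one_le[of w] w y \<eta> mult_right_mono[OF \<eta>(2) y(1)]
    by (smt (verit) exp_le_cancel_iff mult_mono exp_ge_zero norm_ge_zero)
  moreover have "(real n + 1) * exp (s / 2) ^ n \<le> (1 + y) * exp (s / 2 * y)"
  proof (rule mult_mono)
    show "exp (s / 2) ^ n \<le> exp (s / 2 * y)"
      using y s_pos by (simp add: mult.commute mult_right_mono flip: exp_of_nat_mult)
  qed (use y in auto)
  ultimately have "norm (exp w - 1) * ((real n + 1) * exp (s / 2) ^ n)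
      \<le> (\<eta> * y * exp (s / 2 * y)) * ((1 + y) * exp (s / 2 * y))"
    by (rule mult_mono) (use y \<eta> in auto)
  also have "\<dots> = \<eta> * (y * (1 + y) * exp (s * y))"
    by (simp add: mult_ac flip: exp_add)
  also have "\<dots> \<le> \<eta> * ((1 + y)^2 * exp (s * y))"
    using y \<eta> by (intro mult_left_mono mult_right_mono) (auto simp: power2_eq_square)
  also have "(1 + y)^2 * exp (s * y) = exp_weight s x n"
    by (simp add: exp_weight_def y_def add.assoc)
  finally have key: "norm (exp w - 1) * ((real n + 1) * exp (s / 2) ^ n) \<le> \<eta> * exp_weight s x n" .
  have "tilted f \<xi> \<mu> (x, n) - of_real (f x n) = of_real (f x n) * (exp w - 1)"
    by (simp add: tilted_def w_def algebra_simps)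
  then show ?thesis
    using mult_left_mono[OF key nonneg[of x n]] nonneg[of x n] by (simp add: norm_mult mult_ac)
qed

lemma summable_marginal_moment: "summable (\<lambda>n. marginal n * ((real n + 1)^2 * exp (s / 2) ^ n))"
proof (rule summable_dominated_by_slices(1)[OF moment])
  fix n
  show "0 \<le> marginal n * ((real n + 1)^2 * exp (s / 2) ^ n)"
    unfolding marginal_def using nonneg by (simp add: infsum_nonneg)
  have "marginal n * ((real n + 1)^2 * exp (s / 2) ^ n) = (\<Sum>\<^sub>\<infinity>x. f x n * ((real n + 1)^2 * exp (s / 2) ^ n))"
    unfolding marginal_def by (rule infsum_cmult_left[symmetric]) (simp add: summable_on_slice)
  also have "\<dots> \<le> (\<Sum>\<^sub>\<infinity>x. f x n * exp_weight s x n)"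
  proof (rule infsum_mono)
    show "(\<lambda>x. f x n * exp_weight s x n) summable_on UNIV"
      using summable_on_pair_slices(1)[OF moment, of n] by simp
    show "(\<lambda>x. f x n * ((real n + 1)^2 * exp (s / 2) ^ n)) summable_on UNIV"
      by (intro summable_on_cmult_left summable_on_slice)
    show "f x n * ((real n + 1)^2 * exp (s / 2) ^ n) \<le> f x n * exp_weight s x n" for x
      by (intro mult_left_mono moment_weight_le nonneg)
  qed
  finally show "marginal n * ((real n + 1)^2 * exp (s / 2) ^ n) \<le> (\<Sum>\<^sub>\<infinity>x. case (x, n) of (x, n) \<Rightarrow> f x n * exp_weight s x n)"
    by simp
qed

lemma tilted_marginal_sums:
  assumes "norm \<xi> \<le> s / 2" "norm \<mu> \<le> s / 2"
  shows "tilted_marginal \<xi> \<mu> sums (\<Sum>\<^sub>\<infinity>u. tilted f \<xi> \<mu> u)"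
  unfolding tilted_marginal_def[abs_def]
  using summable_on_pair_slices(2)[OF summable_on_tilted[OF assms]] by simp

lemma tilted_marginal_close:
  assumes \<eta>: "0 \<le> \<eta>" "\<eta> \<le> s / 2" and \<xi>: "norm \<xi> \<le> \<eta>" and \<mu>: "norm \<mu> \<le> \<eta>"
  shows "summable (\<lambda>n. norm (tilted_marginal \<xi> \<mu> n - of_real (marginal n)) * ((real n + 1) * exp (s / 2) ^ n))"
    and "coeff_dist (exp (s / 2)) (tilted_marginal \<xi> \<mu>) (\<lambda>n. of_real (marginal n)) \<le> \<eta> * total_weight"
proof -
  define B where "B = (\<lambda>(x, n). \<eta> * (f x n * exp_weight s x n))"
  have B: "B summable_on UNIV"
    unfolding B_def using summable_on_cmult_right[OF moment, of \<eta>] by (simp add: case_prod_unfold)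
  have bound: "norm (tilted_marginal \<xi> \<mu> n - of_real (marginal n)) * ((real n + 1) * exp (s / 2) ^ n)
      \<le> (\<Sum>\<^sub>\<infinity>x. B (x, n))" for n
  proof -
    define w where "w = (real n + 1) * exp (s / 2) ^ n"
    have difference: "((\<lambda>x. tilted f \<xi> \<mu> (x, n) + - of_real (f x n))
        has_sum (tilted_marginal \<xi> \<mu> n + - of_real (marginal n))) UNIV"
      unfolding tilted_marginal_def marginal_def
      using \<xi> \<mu> \<eta> summable_on_pair_slices(1)[OF summable_on_tilted, of \<xi> \<mu> n] summable_on_slice[of n]
      by (intro has_sum_add has_sum_uminusI has_sum_of_real has_sum_infsum) auto
    then have scaled: "((\<lambda>x. (tilted f \<xi> \<mu> (x, n) - of_real (f x n)) * of_real w)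
        has_sum ((tilted_marginal \<xi> \<mu> n - of_real (marginal n)) * of_real w)) UNIV"
      using has_sum_cmult_left by fastforce
    have w: "0 \<le> w"
      by (simp add: w_def)
    have "norm ((tilted f \<xi> \<mu> (x, n) - of_real (f x n)) * of_real w) \<le> B (x, n)" for x
      using norm_tilted_minus_le[OF \<eta> \<xi> \<mu>, of x n] w
      by (simp add: B_def norm_mult w_def[symmetric])
    with scaled have "norm ((tilted_marginal \<xi> \<mu> n - of_real (marginal n)) * of_real w) \<le> (\<Sum>\<^sub>\<infinity>x. B (x, n))"
      by (intro norm_infsum_le[OF _ has_sum_infsum[OF summable_on_pair_slices(1)[OF B]]])
    then show ?thesis
      using w by (simp add: w_def[symmetric] norm_mult)
  qed
  note dominated = summable_dominated_by_slices[OF B _ bound]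
  show "summable (\<lambda>n. norm (tilted_marginal \<xi> \<mu> n - of_real (marginal n)) * ((real n + 1) * exp (s / 2) ^ n))"
    by (rule dominated(1)) simp
  have "(\<Sum>\<^sub>\<infinity>u. B u) = \<eta> * total_weight"
    unfolding B_def total_weight_def by (simp add: case_prod_unfold infsum_cmult_right')
  then show "coeff_dist (exp (s / 2)) (tilted_marginal \<xi> \<mu>) (\<lambda>n. of_real (marginal n)) \<le> \<eta> * total_weight"
    using dominated(2) by (simp add: coeff_dist_def)
qed

end

lemma square_le_exp:
  fixes t a :: real
  assumes "0 \<le> t" "0 < a"
  shows "t^2 \<le> (2 / a)^2 * exp (a * t)"
proof -
  have "a * t / 2 \<le> exp (a * t / 2)"
    using exp_ge_add_one_self[of "a * t / 2"] by linarith
  then have "(a * t / 2)^2 \<le> exp (a * t / 2)^2"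
    using assms by (intro power_mono) auto
  also have "\<dots> = exp (a * t)"
    by (simp add: power2_eq_square flip: exp_add)
  finally show ?thesis
    using assms by (simp add: power_divide field_simps)
qed

lemma exp_moment_if_exp_tail:
  fixes f :: "int ^ 'd \<Rightarrow> nat \<Rightarrow> real"
  assumes nonneg: "\<And>x n. 0 \<le> f x n" and \<nu>: "0 < \<nu>"
    and tail: "\<And>x n. f x n \<le> C * exp (- \<nu> * (norm1 x + real n))"
  shows "exp_moment f (\<nu> / 4)"
proof
  define M where "M = C * (8 / \<nu>)^2 * exp (\<nu> / 4)"
  have C: "0 \<le> C"
    using order_trans[OF nonneg tail, of 0 0] by (simp add: zero_le_mult_iff)
  have "f x n * exp_weight (\<nu> / 4) x n \<le> M * exp (- (\<nu> / 2) * (norm1 x + real n))" for x n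
  proof -
    define y where "y = norm1 x + real n"
    have y: "0 \<le> y"
      using norm1_nonneg[of x] by (simp add: y_def)
    have "(1 + y)^2 \<le> (2 / (\<nu> / 4))^2 * exp (\<nu> / 4 * (1 + y))"
      using y \<nu> by (intro square_le_exp) auto
    also have "\<dots> = (8 / \<nu>)^2 * exp (\<nu> / 4) * exp (\<nu> / 4 * y)"
      by (simp only: distrib_left mult_1_right exp_add mult.assoc) simp
    finally have "(1 + y)^2 * exp (\<nu> / 4 * y)
        \<le> (8 / \<nu>)^2 * exp (\<nu> / 4) * exp (\<nu> / 4 * y) * exp (\<nu> / 4 * y)"
      by (rule mult_right_mono) simp
    moreover have "exp_weight (\<nu> / 4) x n = (1 + y)^2 * exp (\<nu> / 4 * y)"
      by (simp add: exp_weight_def y_def add.assoc)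
    ultimately have "f x n * exp_weight (\<nu> / 4) x n
        \<le> (C * exp (- \<nu> * y)) * ((8 / \<nu>)^2 * exp (\<nu> / 4) * exp (\<nu> / 4 * y) * exp (\<nu> / 4 * y))"
      using tail[of x n] nonneg[of x n] C by (intro mult_mono) (auto simp: y_def)
    also have "\<dots> = M * exp (- (\<nu> / 2) * y)"
      by (simp add: M_def mult_ac flip: exp_add)
    finally show ?thesis
      by (simp add: y_def)
  qed
  note bound = this
  have "(\<lambda>(x, n). M * exp (- (\<nu> / 2) * (norm1 x + real n))) summable_on UNIV"
    using summable_on_cmult_right[OF summable_on_exp_norm1_time[of "\<nu> / 2"], of M] \<nu>
    by (simp add: case_prod_unfold)
  then show "(\<lambda>(x, n). f x n * exp_weight (\<nu> / 4) x n) summable_on UNIV"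
    by (rule summable_on_comparison_test)
       (use bound nonneg in \<open>auto simp: exp_weight_def\<close>)
qed (use nonneg \<nu> in auto)

lemma aperiodic_times_generate:
  fixes f :: "int ^ 'd \<Rightarrow> nat \<Rightarrow> real"
  assumes "aperiodic f"
  shows "\<exists>N c. finite N \<and> N \<subseteq> {n. \<exists>x. 0 < f x n} \<and> (\<Sum>n\<in>N. c n * int n) = 1"
proof -
  have "\<exists>S c. finite S \<and> S \<subseteq> {(x, n). 0 < f x n} \<and> (\<forall>i. (0 :: int ^ 'd) $ i = (\<Sum>s\<in>S. c s * fst s $ i))
      \<and> (1 :: int) = (\<Sum>s\<in>S. c s * int (snd s))"
    using assms unfolding aperiodic_def by blast
  then obtain S c where S: "finite S" "S \<subseteq> {(x, n). 0 < f x n}" and comb: "(\<Sum>s\<in>S. c s * int (snd s)) = 1"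
    by auto
  define c' where "c' n = (\<Sum>s\<in>{s \<in> S. snd s = n}. c s)" for n
  have "(\<Sum>s\<in>S. c s * int (snd s)) = (\<Sum>n\<in>snd ` S. \<Sum>s\<in>{s \<in> S. snd s = n}. c s * int (snd s))"
    by (rule sum.image_gen[OF S(1)])
  also have "\<dots> = (\<Sum>n\<in>snd ` S. c' n * int n)"
    unfolding c'_def sum_distrib_right by (intro sum.cong refl) simp
  finally have "(\<Sum>n\<in>snd ` S. c' n * int n) = 1"
    using comb by simp
  moreover have "snd ` S \<subseteq> {n. \<exists>x. 0 < f x n}"
    using S(2) by (auto simp: subset_iff) blast
  ultimately show ?thesis
    using S(1) by blast
qed

locale tilted_walk = exp_moment f s for f :: "int ^ 'd \<Rightarrow> nat \<Rightarrow> real" and s +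
  assumes total: "((\<lambda>(x, n). f x n) has_sum 1) UNIV"
    and aperiodic: "aperiodic f"
begin

lemma marginal_sums_one: "marginal sums 1"
proof -
  have "(\<lambda>(x, n). f x n) summable_on UNIV"
    using total by (auto simp: summable_on_def)
  from summable_on_pair_slices(2)[OF this] show ?thesis
    unfolding marginal_def[abs_def] infsumI[OF total] by simp
qed

lemma marginal_pos:
  assumes "0 < f x n"
  shows "0 < marginal n"
proof -
  have "(\<Sum>\<^sub>\<infinity>y\<in>{x}. f y n) \<le> marginal n"
    unfolding marginal_def by (rule infsum_mono_neutral) (use summable_on_slice nonneg in auto)
  then show ?thesis
    using assms by simp
qed

sublocale marginal: aperiodic_pgf marginal "exp (s / 2)"
proof
  show "0 \<le> marginal n" for n
    unfolding marginal_def using nonneg by (simp add: infsum_nonneg)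
  show "marginal sums 1"
    by (rule marginal_sums_one)
  show "1 < exp (s / 2)"
    using s_pos by simp
  show "summable (\<lambda>n. marginal n * ((real n + 1)^2 * exp (s / 2) ^ n))"
    by (rule summable_marginal_moment)
  obtain N c where "finite N" "N \<subseteq> {n. \<exists>x. 0 < f x n}" "(\<Sum>n\<in>N. c n * int n) = 1"
    using aperiodic_times_generate[OF aperiodic] by blast
  moreover have "{n. \<exists>x. 0 < f x n} \<subseteq> {n. 0 < marginal n}"
    using marginal_pos by blast
  ultimately show "\<exists>N c. finite N \<and> N \<subseteq> {n. 0 < marginal n} \<and> (\<Sum>n\<in>N. c n * int n) = 1"
    by blast
qed

theorem small_tilt_fhat:
  fixes lam :: "complex ^ 'd \<Rightarrow> complex"
  assumes no_zero_time: "\<And>x. f x 0 = 0"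
  obtains \<eta> \<epsilon> :: real where "0 < \<eta>" "0 < \<epsilon>"
    and "\<And>\<xi>. norm \<xi> \<le> \<eta> \<Longrightarrow> norm (lam \<xi>) \<le> \<eta> \<Longrightarrow> F_fun f \<xi> (lam \<xi>) = 0 \<Longrightarrow>
      (fhat f lam \<xi> 0 = 0 \<and>
        (\<exists>U. open U \<and> cball 0 (1 + \<epsilon>) \<subseteq> U \<and> (\<forall>z\<in>U. summable (\<lambda>n. norm (f_xi f lam \<xi> n * z ^ n)))))
      \<and> (\<forall>z \<in> cball 0 (1 + \<epsilon>). fhat f lam \<xi> z = 1 \<longleftrightarrow> z = 1)
      \<and> deriv (fhat f lam \<xi>) 1 \<noteq> 0"
proof -
  obtain \<epsilon> \<kappa> where \<epsilon>: "0 < \<epsilon>" and \<kappa>: "0 < \<kappa>" and \<epsilon>R: "1 + \<epsilon> < exp (s / 2)"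
    and root: "\<And>(a :: nat \<Rightarrow> complex) z.
      summable (\<lambda>n. norm (a n - of_real (marginal n)) * ((real n + 1) * exp (s / 2) ^ n)) \<Longrightarrow>
      coeff_dist (exp (s / 2)) a (\<lambda>n. of_real (marginal n)) \<le> \<kappa> \<Longrightarrow> a sums 1 \<Longrightarrow> norm z \<le> 1 + \<epsilon> \<Longrightarrow>
      (\<Sum>n. a n * z ^ n) = 1 \<longleftrightarrow> z = 1"
    and deriv: "\<And>(a :: nat \<Rightarrow> complex).
      summable (\<lambda>n. norm (a n - of_real (marginal n)) * ((real n + 1) * exp (s / 2) ^ n)) \<Longrightarrow>
      coeff_dist (exp (s / 2)) a (\<lambda>n. of_real (marginal n)) \<le> \<kappa> \<Longrightarrow> deriv (\<lambda>z. \<Sum>n. a n * z ^ n) 1 \<noteq> 0"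
    by (rule marginal.perturbed_pgf_unique_root) (rule that)
  define \<eta> where "\<eta> = min (s / 2) (min \<kappa> (1 / 2) / (total_weight + 1))"
  have \<eta>: "0 < \<eta>" "\<eta> \<le> s / 2" "\<eta> * total_weight \<le> min \<kappa> (1 / 2)"
  proof -
    show "0 < \<eta>"
      using s_pos \<kappa> total_weight_nonneg by (simp add: \<eta>_def)
    show "\<eta> \<le> s / 2"
      unfolding \<eta>_def by (rule min.cobounded1)
    have "\<eta> * total_weight \<le> min \<kappa> (1 / 2) / (total_weight + 1) * total_weight"
      unfolding \<eta>_def using total_weight_nonneg by (intro mult_right_mono min.cobounded2)
    also have "\<dots> \<le> min \<kappa> (1 / 2) / (total_weight + 1) * (total_weight + 1)"
      using total_weight_nonneg \<kappa> by (intro mult_left_mono) auto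
    finally show "\<eta> * total_weight \<le> min \<kappa> (1 / 2)"
      using total_weight_nonneg by simp
  qed
  show ?thesis
  proof (rule that[OF \<eta>(1) \<epsilon>])
    fix \<xi>
    assume \<xi>: "norm \<xi> \<le> \<eta>" and \<mu>: "norm (lam \<xi>) \<le> \<eta>" and char: "F_fun f \<xi> (lam \<xi>) = 0"
    define a where "a = tilted_marginal \<xi> (lam \<xi>)"
    have coeffs: "f_xi f lam \<xi> = a"
      by (simp add: fun_eq_iff a_def f_xi_def tilted_marginal_def tilted_def)
    note close = tilted_marginal_close[OF less_imp_le[OF \<eta>(1)] \<eta>(2) \<xi> \<mu>, folded a_def]
    have dist: "coeff_dist (exp (s / 2)) a (\<lambda>n. of_real (marginal n)) \<le> min \<kappa> (1 / 2)"
      using close(2) \<eta> by simp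
    have sums: "a sums (\<Sum>\<^sub>\<infinity>u. tilted f \<xi> (lam \<xi>) u)"
      unfolding a_def using \<xi> \<mu> \<eta> by (intro tilted_marginal_sums) auto
    \<comment> \<open>\<open>Ln 0 = 0\<close>, so \<open>F = 0\<close> alone does not exclude a vanishing sum\<close>
    have "norm ((\<Sum>\<^sub>\<infinity>u. tilted f \<xi> (lam \<xi>) u) - 1) \<le> 1 / 2"
      using marginal.perturbed_minus_pgf[OF close(1), of 1] marginal.pgf_one sums dist s_pos
      by (simp add: sums_iff)
    then have "(\<Sum>\<^sub>\<infinity>u. tilted f \<xi> (lam \<xi>) u) \<noteq> 0"
      by auto
    from exp_Ln[OF this] have "(\<Sum>\<^sub>\<infinity>u. tilted f \<xi> (lam \<xi>) u) = 1"
      using char by (simp add: F_fun_def tilted_def)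
    with sums have "a sums 1"
      by simp
    moreover have "a 0 = 0"
      by (simp add: a_def tilted_marginal_def tilted_def no_zero_time)
    ultimately show "(fhat f lam \<xi> 0 = 0 \<and>
        (\<exists>U. open U \<and> cball 0 (1 + \<epsilon>) \<subseteq> U \<and> (\<forall>z\<in>U. summable (\<lambda>n. norm (f_xi f lam \<xi> n * z ^ n)))))
      \<and> (\<forall>z \<in> cball 0 (1 + \<epsilon>). fhat f lam \<xi> z = 1 \<longleftrightarrow> z = 1)
      \<and> deriv (fhat f lam \<xi>) 1 \<noteq> 0"
      using marginal.summable_perturbed_powser[OF close(1)] root[OF close(1)] deriv[OF close(1)] dist \<epsilon>R
      unfolding fhat_def[abs_def] coeffs
      by (auto intro!: exI[of _ "ball 0 (exp (s / 2))"])
  qed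
qed

end

theorem lemma3:
  fixes f :: "int ^ 'd \<Rightarrow> nat \<Rightarrow> real"
    and lam :: "complex ^ 'd \<Rightarrow> complex"
  assumes nonneg: "\<And>x n. f x n \<ge> 0"
    and no_zero_time: "\<And>x. f x 0 = 0"
    and prob: "((\<lambda>(x, n). f x n) has_sum 1) UNIV"
    and nondeg: "nondegenerate f"
    and aper: "aperiodic f"
    and tail: "\<exists>C \<nu>. \<nu> > 0 \<and>
                 (\<forall>x n. f x n \<le> C * exp (- \<nu> * ((\<Sum>i\<in>UNIV. \<bar>real_of_int (x $ i)\<bar>) + real n)))"
    and lam_0: "lam 0 = 0"
    and lam_cont: "\<exists>r > 0. continuous_on (ball 0 r) lam"
    and lam_char: "\<exists>r > 0. \<exists>\<rho> > 0. \<forall>\<xi> \<in> ball 0 r. \<forall>\<mu> \<in> ball 0 \<rho>.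
                      F_fun f \<xi> \<mu> = 0 \<longleftrightarrow> \<mu> = lam \<xi>"
  shows "\<exists>\<delta> > 0. \<exists>\<epsilon> > 0. \<forall>\<xi> :: complex ^ 'd. norm \<xi> < \<delta> \<longrightarrow>
           (fhat f lam \<xi> 0 = 0 \<and>
            (\<exists>U. open U \<and> cball 0 (1 + \<epsilon>) \<subseteq> U \<and>
                 (\<forall>z\<in>U. summable (\<lambda>n. norm (f_xi f lam \<xi> n * z ^ n)))))
         \<and> (\<forall>z \<in> cball 0 (1 + \<epsilon>). fhat f lam \<xi> z = 1 \<longleftrightarrow> z = 1)
         \<and> deriv (fhat f lam \<xi>) 1 \<noteq> 0"
proof -
  obtain C \<nu> where \<nu>: "0 < \<nu>" and bound: "\<And>x n. f x n \<le> C * exp (- \<nu> * (norm1 x + real n))"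
    using tail unfolding norm1_def by blast
  interpret tilted_walk f "\<nu> / 4"
    by (intro tilted_walk.intro exp_moment_if_exp_tail[OF nonneg \<nu> bound] tilted_walk_axioms.intro prob aper)
  obtain \<eta> \<epsilon> where \<eta>: "0 < \<eta>" and \<epsilon>: "0 < \<epsilon>" and small_tilt: "\<And>\<xi>. norm \<xi> \<le> \<eta> \<Longrightarrow> norm (lam \<xi>) \<le> \<eta> \<Longrightarrow>
      F_fun f \<xi> (lam \<xi>) = 0 \<Longrightarrow> (fhat f lam \<xi> 0 = 0 \<and>
        (\<exists>U. open U \<and> cball 0 (1 + \<epsilon>) \<subseteq> U \<and> (\<forall>z\<in>U. summable (\<lambda>n. norm (f_xi f lam \<xi> n * z ^ n)))))
      \<and> (\<forall>z \<in> cball 0 (1 + \<epsilon>). fhat f lam \<xi> z = 1 \<longleftrightarrow> z = 1) \<and> deriv (fhat f lam \<xi>) 1 \<noteq> 0"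
    by (rule small_tilt_fhat[OF no_zero_time]) (rule that)
  obtain r \<rho> where r: "0 < r" "0 < \<rho>" and char: "\<And>\<xi>. \<xi> \<in> ball 0 r \<Longrightarrow> lam \<xi> \<in> ball 0 \<rho> \<Longrightarrow>
      F_fun f \<xi> (lam \<xi>) = 0"
    using lam_char by blast
  obtain r' where "0 < r'" "continuous_on (ball 0 r') lam"
    using lam_cont by blast
  then have "isCont lam 0"
    by (simp add: continuous_on_eq_continuous_at)
  then obtain d where d: "0 < d" "\<And>\<xi>. norm \<xi> < d \<Longrightarrow> norm (lam \<xi>) < min \<eta> \<rho>"
    using \<eta> r lam_0 unfolding continuous_at_eps_delta dist_norm by (metis diff_zero min_less_iff_conj)
  have "(fhat f lam \<xi> 0 = 0 \<and>
        (\<exists>U. open U \<and> cball 0 (1 + \<epsilon>) \<subseteq> U \<and> (\<forall>z\<in>U. summable (\<lambda>n. norm (f_xi f lam \<xi> n * z ^ n)))))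
      \<and> (\<forall>z \<in> cball 0 (1 + \<epsilon>). fhat f lam \<xi> z = 1 \<longleftrightarrow> z = 1) \<and> deriv (fhat f lam \<xi>) 1 \<noteq> 0"
    if "norm \<xi> < min d (min r \<eta>)" for \<xi>
    using that d(2)[of \<xi>] by (intro small_tilt char) auto
  with d(1) r(1) \<eta> \<epsilon> show ?thesis
    by (intro exI[of _ "min d (min r \<eta>)"] exI[of _ \<epsilon>]) auto
qed

end
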